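(* Let $G$ be a connected graph with vertex set $\{u_1,\dots,u_n\}$, $n\ge2$, with non-singleton true twin equivalence classes $U_1,\dots,U_k$, and let $\mathcal{H}=\{H_1,\dots,H_n\}$ be a family of non-empty graphs (each having at least one edge). Then $$\dim_l(G\circ\mathcal{H})=\sum_{i=1}^n\operatorname{adim}_l(H_i)+\sum_{j:\,I\cap U_j\ne\emptyset}(|I\cap U_j|-1),$$ where $I=\{u_i: H_i\in\mathcal{G}\}$.
   Context: All graphs are finite and simple. $d_G$ is shortest-path distance ($+\infty$ between components), $d_{G,2}=\min\{d_G,2\}$; $s$ distinguishes $x,y$ w.r.t. $d$ if $d(s,x)\ne d(s,y)$. $\dim_l(G)$: minimum size of $S\subseteq V(G)$ such that any two adjacent vertices are distinguished w.r.t. $d_G$ by some vertex of $S$. $\operatorname{adim}_l(H)$: minimum size of $S\subseteq V(H)$ such that any two adjacent vertices are distinguished w.r.t. $d_{H,2}$ by some vertex of $S$; minimum such sets are local adjacency bases. $\mathcal{G}$: class of graphs $H$ such that every local adjacency basis $B$ of $H$ satisfies $B\subseteq N_H(v)$ for some $v\in V(H)$. True twins: $N[x]=N[y]$. Lexicographic product $G\circ\mathcal{H}$: vertex set $\bigcup_i\{u_i\}\times V(H_i)$, $(u_i,v)\sim(u_j,w)$ iff $u_iu_j\in E(G)$, or $i=j$ and $vw\in E(H_i)$. *)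

theory Defs
  imports Main "HOL-Library.Extended_Nat"
begin

definition graph :: "'a set \<Rightarrow> ('a \<Rightarrow> 'a \<Rightarrow> bool) \<Rightarrow> bool" where
  "graph V E \<longleftrightarrow> finite V \<and> (\<forall>x y. E x y \<longrightarrow> x \<in> V \<and> y \<in> V \<and> x \<noteq> y \<and> E y x)"

definition connected_graph :: "'a set \<Rightarrow> ('a \<Rightarrow> 'a \<Rightarrow> bool) \<Rightarrow> bool" where
  "connected_graph V E \<longleftrightarrow> (\<forall>x\<in>V. \<forall>y\<in>V. \<exists>n. (E ^^ n) x y)"

definition dist :: "('a \<Rightarrow> 'a \<Rightarrow> bool) \<Rightarrow> 'a \<Rightarrow> 'a \<Rightarrow> enat" where
  "dist E x y = (if \<exists>n. (E ^^ n) x y then enat (LEAST n. (E ^^ n) x y) else \<infinity>)"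

definition dist2 :: "('a \<Rightarrow> 'a \<Rightarrow> bool) \<Rightarrow> 'a \<Rightarrow> 'a \<Rightarrow> enat" where
  "dist2 E x y = min (dist E x y) 2"

definition local_resolving :: "('a \<Rightarrow> 'a \<Rightarrow> bool) \<Rightarrow> ('a \<Rightarrow> 'a \<Rightarrow> enat) \<Rightarrow> 'a set \<Rightarrow> bool" where
  "local_resolving E d S \<longleftrightarrow> (\<forall>x y. E x y \<longrightarrow> (\<exists>s\<in>S. d s x \<noteq> d s y))"

definition local_metric_dim :: "'a set \<Rightarrow> ('a \<Rightarrow> 'a \<Rightarrow> bool) \<Rightarrow> nat" where
  "local_metric_dim V E = (LEAST k. \<exists>S. S \<subseteq> V \<and> card S = k \<and> local_resolving E (dist E) S)"

definition local_adj_dim :: "'a set \<Rightarrow> ('a \<Rightarrow> 'a \<Rightarrow> bool) \<Rightarrow> nat" where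
  "local_adj_dim V E = (LEAST k. \<exists>S. S \<subseteq> V \<and> card S = k \<and> local_resolving E (dist2 E) S)"

definition local_adj_basis :: "'a set \<Rightarrow> ('a \<Rightarrow> 'a \<Rightarrow> bool) \<Rightarrow> 'a set \<Rightarrow> bool" where
  "local_adj_basis V E B \<longleftrightarrow> B \<subseteq> V \<and> local_resolving E (dist2 E) B \<and> card B = local_adj_dim V E"

definition class_G :: "'a set \<Rightarrow> ('a \<Rightarrow> 'a \<Rightarrow> bool) \<Rightarrow> bool" where
  "class_G V E \<longleftrightarrow> (\<forall>B. local_adj_basis V E B \<longrightarrow> (\<exists>v\<in>V. B \<subseteq> {w. E v w}))"

definition closed_nbhd :: "('a \<Rightarrow> 'a \<Rightarrow> bool) \<Rightarrow> 'a \<Rightarrow> 'a set" where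
  "closed_nbhd E x = insert x {y. E x y}"

definition twin_class :: "'a set \<Rightarrow> ('a \<Rightarrow> 'a \<Rightarrow> bool) \<Rightarrow> 'a \<Rightarrow> 'a set" where
  "twin_class V E x = {y \<in> V. closed_nbhd E y = closed_nbhd E x}"

(* lexicographic product G \<circ> H, H u = (HV u, HE u) the graph attached to vertex u *)
definition lex_V :: "'a set \<Rightarrow> ('a \<Rightarrow> 'b set) \<Rightarrow> ('a \<times> 'b) set" where
  "lex_V V HV = Sigma V HV"

definition lex_E :: "'a set \<Rightarrow> ('a \<Rightarrow> 'a \<Rightarrow> bool) \<Rightarrow> ('a \<Rightarrow> 'b set) \<Rightarrow> ('a \<Rightarrow> 'b \<Rightarrow> 'b \<Rightarrow> bool)
    \<Rightarrow> ('a \<times> 'b) \<Rightarrow> ('a \<times> 'b) \<Rightarrow> bool" where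
  "lex_E V E HV HE p q \<longleftrightarrow> p \<in> Sigma V HV \<and> q \<in> Sigma V HV \<and>
     (E (fst p) (fst q) \<or> (fst p = fst q \<and> HE (fst p) (snd p) (snd q)))"

end

theory Submission
  imports Defs
begin

text \<open>
  In \<open>G \<circ> \<H>\<close> a vertex outside the layer over \<open>u\<close> sees that whole layer at the
  distance in \<open>G\<close> of the base vertices, while inside the layer the distance is
  \<open>min(d\<^sub>H\<^sub>u, 2)\<close>, because \<open>u\<close> has a neighbour in \<open>G\<close>. Hence \<open>S\<close> is a local resolving set
  iff every layer \<open>S\<^sub>u\<close> is a local adjacency resolving set of \<open>H\<^sub>u\<close> and no two distinct
  true twins \<open>u, u'\<close> have both \<open>S\<^sub>u\<close> and \<open>S\<^sub>u\<^sub>'\<close> inside an open neighbourhood: an edge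
  between non-twins is resolved by the layer over any vertex adjacent to exactly one end,
  an edge between twins only from inside their own layers. A layer of size
  \<open>adim\<^sub>l(H\<^sub>u)\<close> lies in an open neighbourhood whenever \<open>H\<^sub>u \<in> \<G>\<close>; otherwise some basis
  avoids this, and adding the centre \<open>v\<close> to a basis inside \<open>N(v)\<close> always avoids it at the
  price of one vertex. So in each twin class \<open>U\<close> all but one vertex of \<open>I \<inter> U\<close> pay one
  extra vertex.
\<close>

section \<open>Distances\<close>

lemma dist_eq_enatI:
  assumes "(E ^^ k) x y" and "\<And>m. m < k \<Longrightarrow> \<not> (E ^^ m) x y"
  shows "dist E x y = enat k"
proof -
  have "(LEAST n. (E ^^ n) x y) = k"
    by (rule Least_equality) (use assms not_less in auto)
  then show ?thesis
    using assms(1) unfolding dist_def by auto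
qed

lemma dist_self [simp]: "dist E x x = 0"
  using dist_eq_enatI[of 0 E x x] by (simp add: zero_enat_def)

lemma dist_eq_1_iff: "dist E x y = 1 \<longleftrightarrow> x \<noteq> y \<and> E x y"
proof
  assume dist: "dist E x y = 1"
  then have walk: "\<exists>n. (E ^^ n) x y"
    unfolding dist_def by (auto split: if_splits)
  with dist have least: "(LEAST n. (E ^^ n) x y) = 1"
    unfolding dist_def by (simp add: one_enat_def)
  from LeastI_ex[OF walk] have "E x y"
    unfolding least by (simp add: relcompp_apply)
  moreover from not_less_Least[of 0 "\<lambda>n. (E ^^ n) x y"] least have "x \<noteq> y"
    by auto
  ultimately show "x \<noteq> y \<and> E x y"
    by blast
next
  assume "x \<noteq> y \<and> E x y"
  then show "dist E x y = 1"
    using dist_eq_enatI[of 1 E x y] by (auto simp: one_enat_def less_Suc_eq)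
qed

lemma dist_ge_2:
  assumes "x \<noteq> y" and "\<not> E x y"
  shows "dist E x y \<ge> 2"
proof (cases "\<exists>n. (E ^^ n) x y")
  case True
  have "\<not> (E ^^ n) x y" if "n < 2" for n
    using that assms by (auto simp: less_2_cases_iff relcompp_apply)
  then have "2 \<le> (LEAST n. (E ^^ n) x y)"
    using LeastI_ex[OF True] by (meson not_less)
  then show ?thesis
    using True unfolding dist_def by (simp add: numeral_eq_enat)
qed (simp add: dist_def)

lemma dist2_eq: "dist2 E x y = (if x = y then 0 else if E x y then 1 else 2)"
  unfolding dist2_def using dist_eq_1_iff[of E x y] dist_ge_2[of x y E]
  by (auto simp: min_def)

lemma dist_le_dist_if_shorter_walks:
  assumes "\<And>m. (E' ^^ m) x' y' \<Longrightarrow> \<exists>k\<le>m. (E ^^ k) x y"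
  shows "dist E x y \<le> dist E' x' y'"
proof (cases "\<exists>n. (E' ^^ n) x' y'")
  case True
  then have "(E' ^^ (LEAST n. (E' ^^ n) x' y')) x' y'"
    by (rule LeastI_ex)
  then obtain k where "k \<le> (LEAST n. (E' ^^ n) x' y')" and "(E ^^ k) x y"
    using assms by blast
  then show ?thesis
    using True Least_le[of "\<lambda>n. (E ^^ n) x y" k] unfolding dist_def by auto
qed (simp add: dist_def)

section \<open>Graphs, twins and local resolving sets\<close>

lemma graph_sym: "graph V E \<Longrightarrow> E x y \<Longrightarrow> E y x"
  unfolding graph_def by blast

lemma graph_irrefl: "graph V E \<Longrightarrow> \<not> E x x"
  unfolding graph_def by blast

lemma graph_edge_vertices: "graph V E \<Longrightarrow> E x y \<Longrightarrow> x \<in> V \<and> y \<in> V"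
  unfolding graph_def by blast

lemma exists_neighbour:
  assumes "connected_graph V E" and "card V \<ge> 2" and "u \<in> V"
  shows "\<exists>y. E u y"
proof -
  have "\<not> V \<subseteq> {u}"
  proof
    assume "V \<subseteq> {u}"
    then have "card V \<le> 1"
      using card_mono[of "{u}" V] by simp
    with assms(2) show False
      by simp
  qed
  then obtain z where z: "z \<in> V" "z \<noteq> u"
    by blast
  then obtain n where walk: "(E ^^ n) u z"
    using assms(1,3) unfolding connected_graph_def by blast
  with z obtain k where "n = Suc k"
    by (cases n) auto
  with walk show ?thesis
    by (metis relpowp_Suc_D2)
qed

lemma twins_adjacent:
  assumes "u \<noteq> u'" and "closed_nbhd E u = closed_nbhd E u'"
  shows "E u u'"
proof -
  have "u' \<in> closed_nbhd E u"
    unfolding assms(2) by (simp add: closed_nbhd_def)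
  with assms(1) show ?thesis
    unfolding closed_nbhd_def by simp
qed

lemma exists_vertex_separating_non_twins:
  assumes "graph V E" and "E u u'" and "closed_nbhd E u \<noteq> closed_nbhd E u'"
  shows "\<exists>w. w \<noteq> u \<and> w \<noteq> u' \<and> E w u \<noteq> E w u'"
proof (rule ccontr)
  assume "\<not> ?thesis"
  then have "E u x \<longleftrightarrow> E u' x" if "x \<noteq> u" "x \<noteq> u'" for x
    using that graph_sym[OF assms(1)] by blast
  moreover have "E u' u"
    using assms(2) graph_sym[OF assms(1)] by blast
  ultimately have "x \<in> closed_nbhd E u \<longleftrightarrow> x \<in> closed_nbhd E u'" for x
    using assms(2) unfolding closed_nbhd_def by (cases "x = u"; cases "x = u'") auto
  with assms(3) show False
    by blast
qed

lemma walk_to_twin: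
  assumes "graph V E" and "(E ^^ m) w u" and "w \<noteq> u"
    and "closed_nbhd E u = closed_nbhd E u'"
  shows "\<exists>k\<le>m. (E ^^ k) w u'"
proof -
  obtain k where m: "m = Suc k"
    using assms(2,3) by (cases m) auto
  with assms(2) obtain z where z: "(E ^^ k) w z" "E z u"
    by (auto elim: relpowp_Suc_E)
  have "z \<in> closed_nbhd E u"
    using z(2) graph_sym[OF assms(1)] unfolding closed_nbhd_def by auto
  then have "z = u' \<or> E u' z"
    unfolding assms(4) by (simp add: closed_nbhd_def)
  then have "z = u' \<or> E z u'"
    using graph_sym[OF assms(1)] by blast
  then show ?thesis
    using z(1) m by (metis le_SucI order_refl relpowp_Suc_I)
qed

lemma dist_twin:
  assumes "graph V E" and "w \<noteq> u" and "w \<noteq> u'"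
    and "closed_nbhd E u = closed_nbhd E u'"
  shows "dist E w u = dist E w u'"
  using assms walk_to_twin[OF assms(1) _ _ assms(4)[symmetric]] walk_to_twin[OF assms(1)]
  by (intro antisym dist_le_dist_if_shorter_walks) blast+

lemma local_resolving_mono:
  "local_resolving E d S \<Longrightarrow> S \<subseteq> T \<Longrightarrow> local_resolving E d T"
  unfolding local_resolving_def by blast

lemma local_adj_dim_le_card:
  assumes "S \<subseteq> V" and "local_resolving E (dist2 E) S"
  shows "local_adj_dim V E \<le> card S"
  unfolding local_adj_dim_def using assms by (intro Least_le) blast

lemma local_adj_basis_exists:
  assumes "graph V E"
  shows "\<exists>B. local_adj_basis V E B"
proof -
  have "local_resolving E (dist2 E) V"
    unfolding local_resolving_def
    using graph_edge_vertices[OF assms] graph_irrefl[OF assms] by (fastforce simp: dist2_eq)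
  then have "\<exists>k S. S \<subseteq> V \<and> card S = k \<and> local_resolving E (dist2 E) S"
    by blast
  from LeastI_ex[OF this] show ?thesis
    unfolding local_adj_basis_def local_adj_dim_def by blast
qed

definition in_open_nbhd :: "'a set \<Rightarrow> ('a \<Rightarrow> 'a \<Rightarrow> bool) \<Rightarrow> 'a set \<Rightarrow> bool" where
  "in_open_nbhd V E B \<longleftrightarrow> (\<exists>v\<in>V. B \<subseteq> {w. E v w})"

lemma class_G_iff: "class_G V E \<longleftrightarrow> (\<forall>B. local_adj_basis V E B \<longrightarrow> in_open_nbhd V E B)"
  unfolding class_G_def in_open_nbhd_def ..

text \<open>A common neighbour \<open>c\<close> of \<open>v\<close> and \<open>x\<close> has adjacency distance 1 to both.\<close>

lemma insert_centre_not_in_open_nbhd: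
  assumes "graph V E" and "local_resolving E (dist2 E) B" and "B \<subseteq> {w. E v w}"
  shows "\<not> in_open_nbhd V E (insert v B)"
proof
  assume "in_open_nbhd V E (insert v B)"
  then obtain x where x: "E x v" "B \<subseteq> {w. E x w}"
    unfolding in_open_nbhd_def by auto
  then obtain c where c: "c \<in> B" "dist2 E c v \<noteq> dist2 E c x"
    using assms(2) graph_sym[OF assms(1)] unfolding local_resolving_def by blast
  then have "E c v" "E c x" "c \<noteq> v" "c \<noteq> x"
    using assms(3) x graph_sym[OF assms(1)] graph_irrefl[OF assms(1)] by blast+
  with c show False
    by (simp add: dist2_eq)
qed

text \<open>The layer over \<open>u\<close> of an optimal resolving set of the product; \<open>extra\<close> marks the
  vertices of \<open>I\<close> that pay one vertex more than \<open>adim\<^sub>l(H\<^sub>u)\<close>.\<close>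

lemma exists_local_resolving_set:
  assumes "graph V E" and "extra \<Longrightarrow> class_G V E"
  shows "\<exists>T\<subseteq>V. local_resolving E (dist2 E) T \<and> card T = local_adj_dim V E + of_bool extra
    \<and> (in_open_nbhd V E T \<longrightarrow> class_G V E \<and> \<not> extra)"
proof (cases "class_G V E")
  case G: True
  obtain B where B: "local_adj_basis V E B"
    using local_adj_basis_exists[OF assms(1)] by blast
  show ?thesis
  proof (cases extra)
    case True
    from B G obtain v where v: "v \<in> V" "B \<subseteq> {w. E v w}"
      unfolding class_G_iff in_open_nbhd_def by blast
    then have "v \<notin> B"
      using graph_irrefl[OF assms(1)] by blast
    moreover have "finite B"
      using B assms(1) finite_subset unfolding local_adj_basis_def graph_def by blast
    ultimately have "card (insert v B) = local_adj_dim V E + 1"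
      using B unfolding local_adj_basis_def by simp
    moreover have "\<not> in_open_nbhd V E (insert v B)"
      using insert_centre_not_in_open_nbhd[OF assms(1) _ v(2)] B
      unfolding local_adj_basis_def by blast
    ultimately show ?thesis
      using B v(1) True local_resolving_mono[of E "dist2 E" B "insert v B"]
      unfolding local_adj_basis_def by (intro exI[of _ "insert v B"]) auto
  next
    case False
    with B G show ?thesis
      unfolding local_adj_basis_def by auto
  qed
next
  case False
  then obtain B where "local_adj_basis V E B" "\<not> in_open_nbhd V E B"
    unfolding class_G_iff by blast
  with False assms(2) show ?thesis
    unfolding local_adj_basis_def by auto
qed

section \<open>Counting over blocks\<close>

lemma sum_plus_block_defects_le:
  fixes f g :: "'a \<Rightarrow> nat"
  assumes "finite V" and "\<forall>U\<in>C. U \<subseteq> V" and "pairwise disjnt C"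
    and "\<forall>u\<in>V. g u \<le> f u"
    and tight: "\<forall>U\<in>C. \<forall>u\<in>J \<inter> U. \<forall>u'\<in>J \<inter> U. f u = g u \<longrightarrow> f u' = g u' \<longrightarrow> u = u'"
  shows "(\<Sum>u\<in>V. g u) + (\<Sum>U\<in>C. card (J \<inter> U) - 1) \<le> (\<Sum>u\<in>V. f u)"
proof -
  define e where "e u = f u - g u" for u
  have fin: "finite U" if "U \<in> C" for U
    using that assms(1,2) finite_subset by blast
  have block: "card (J \<inter> U) - 1 \<le> (\<Sum>u\<in>U. e u)" if U: "U \<in> C" for U
  proof -
    define Z where "Z = {u \<in> J \<inter> U. e u = 0}"
    have "f u = g u" if "u \<in> Z" for u
      using that U assms(2,4) unfolding Z_def e_def by fastforce
    then have "card Z \<le> 1"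
      using tight U unfolding Z_def by (auto simp: card_le_Suc0_iff_eq fin)
    then have "card (J \<inter> U) - 1 \<le> card (J \<inter> U - Z)"
      using diff_card_le_card_Diff[of Z "J \<inter> U"] fin[OF U] unfolding Z_def by auto
    also have "\<dots> = (\<Sum>u\<in>J \<inter> U - Z. 1)"
      by simp
    also have "\<dots> \<le> (\<Sum>u\<in>J \<inter> U - Z. e u)"
      by (rule sum_mono) (auto simp: Z_def)
    also have "\<dots> \<le> (\<Sum>u\<in>U. e u)"
      by (rule sum_mono2) (use fin[OF U] in auto)
    finally show ?thesis .
  qed
  have "finite C"
    using assms(1,2) finite_subset[of C "Pow V"] by auto
  have "(\<Sum>U\<in>C. card (J \<inter> U) - 1) \<le> (\<Sum>U\<in>C. \<Sum>u\<in>U. e u)"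
    by (rule sum_mono) (rule block)
  also have "\<dots> = (\<Sum>u\<in>\<Union>C. e u)"
    using sum.Union_disjoint[of C e] fin assms(3) by (auto simp: pairwise_def disjnt_def)
  also have "\<dots> \<le> (\<Sum>u\<in>V. e u)"
    by (rule sum_mono2) (use assms(1,2) in auto)
  finally have "(\<Sum>u\<in>V. g u) + (\<Sum>U\<in>C. card (J \<inter> U) - 1) \<le> (\<Sum>u\<in>V. g u + e u)"
    by (simp add: sum.distrib)
  also have "\<dots> = (\<Sum>u\<in>V. f u)"
    using assms(4) by (intro sum.cong) (auto simp: e_def)
  finally show ?thesis .
qed

lemma exists_subset_omitting_one_per_block:
  assumes "finite V" and "\<forall>U\<in>C. U \<subseteq> V" and "pairwise disjnt C"
  shows "\<exists>X\<subseteq>J. card X = (\<Sum>U\<in>C. card (J \<inter> U) - 1)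
    \<and> (\<forall>U\<in>C. \<forall>u\<in>J \<inter> U - X. \<forall>u'\<in>J \<inter> U - X. u = u')"
proof -
  define r where "r U = (SOME u. u \<in> J \<inter> U)" for U
  define X where "X = (\<Union>U\<in>C. J \<inter> U - {r U})"
  have fin: "finite U" if "U \<in> C" for U
    using that assms(1,2) finite_subset by blast
  have "finite C"
    using assms(1,2) finite_subset[of C "Pow V"] by auto
  then have "card X = (\<Sum>U\<in>C. card (J \<inter> U - {r U}))"
    unfolding X_def using fin assms(3)
    by (intro card_UN_disjoint) (auto simp: pairwise_def disjnt_def)
  also have "\<dots> = (\<Sum>U\<in>C. card (J \<inter> U) - 1)"
  proof (rule sum.cong)
    fix U assume "U \<in> C"
    show "card (J \<inter> U - {r U}) = card (J \<inter> U) - 1"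
    proof (cases "J \<inter> U = {}")
      case False
      then have "r U \<in> J \<inter> U"
        unfolding r_def by (metis equals0I someI_ex)
      then show ?thesis
        by (simp add: card_Diff_singleton)
    qed simp
  qed simp
  moreover have "u = r U" if "U \<in> C" "u \<in> J \<inter> U - X" for U u
    using that unfolding X_def by blast
  moreover have "X \<subseteq> J"
    unfolding X_def by blast
  ultimately show ?thesis
    by metis
qed

lemma sum_card_inter_minus_1_filter:
  assumes "\<forall>U\<in>C. finite U" and "finite C"
  shows "(\<Sum>U\<in>{U\<in>C. 2 \<le> card U \<and> J \<inter> U \<noteq> {}}. card (J \<inter> U) - 1)
    = (\<Sum>U\<in>C. card (J \<inter> U) - 1)"
proof (rule sum.mono_neutral_left)
  show "\<forall>U\<in>C - {U\<in>C. 2 \<le> card U \<and> J \<inter> U \<noteq> {}}. card (J \<inter> U) - 1 = 0"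
  proof
    fix U assume U: "U \<in> C - {U\<in>C. 2 \<le> card U \<and> J \<inter> U \<noteq> {}}"
    have "card (J \<inter> U) \<le> card U"
      using U assms(1) by (intro card_mono) auto
    with U show "card (J \<inter> U) - 1 = 0"
      by auto
  qed
qed (use assms(2) in auto)

lemma closed_nbhd_eq_if_twin_class:
  "u \<in> twin_class V E x \<Longrightarrow> u' \<in> twin_class V E x \<Longrightarrow> closed_nbhd E u = closed_nbhd E u'"
  unfolding twin_class_def by auto

lemma twin_classes_subset: "\<forall>U\<in>twin_class V E ` V. U \<subseteq> V"
  unfolding twin_class_def by auto

lemma twin_classes_disjoint: "pairwise disjnt (twin_class V E ` V)"
  unfolding pairwise_def disjnt_def twin_class_def by auto

section \<open>The lexicographic product\<close>

locale lex_product =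
  fixes V :: "'a set" and E :: "'a \<Rightarrow> 'a \<Rightarrow> bool"
    and HV :: "'a \<Rightarrow> 'b set" and HE :: "'a \<Rightarrow> 'b \<Rightarrow> 'b \<Rightarrow> bool"
  assumes graph: "graph V E" and connected: "connected_graph V E" and two_vertices: "card V \<ge> 2"
    and layers: "\<forall>u\<in>V. graph (HV u) (HE u) \<and> (\<exists>v w. HE u v w)"
begin

abbreviation lex :: "'a \<times> 'b \<Rightarrow> 'a \<times> 'b \<Rightarrow> bool" where
  "lex \<equiv> lex_E V E HV HE"

abbreviation I :: "'a set" where
  "I \<equiv> {u\<in>V. class_G (HV u) (HE u)}"

lemma finite_vertices: "finite V"
  using graph by (simp add: graph_def)

lemma layer_graph: "u \<in> V \<Longrightarrow> graph (HV u) (HE u)"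
  using layers by blast

lemma finite_layer: "u \<in> V \<Longrightarrow> finite (HV u)"
  using layer_graph by (simp add: graph_def)

lemma layer_nonempty: "u \<in> V \<Longrightarrow> \<exists>b. b \<in> HV u"
  using layers graph_edge_vertices by metis

lemma lex_iff:
  "lex p q \<longleftrightarrow> p \<in> Sigma V HV \<and> q \<in> Sigma V HV \<and>
     (E (fst p) (fst q) \<or> (fst p = fst q \<and> HE (fst p) (snd p) (snd q)))"
  unfolding lex_E_def ..

lemma lex_walk_lift:
  assumes "(E ^^ m) w u" and "m \<ge> 1" and "c \<in> HV w" and "a \<in> HV u"
  shows "(lex ^^ m) (w, c) (u, a)"
  using assms
proof (induction m arbitrary: u a)
  case (Suc k)
  from Suc.prems(1) obtain z where z: "(E ^^ k) w z" "E z u"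
    by (rule relpowp_Suc_E)
  then have zu: "z \<in> V" "u \<in> V"
    using graph_edge_vertices[OF graph] by blast+
  show ?case
  proof (cases "k = 0")
    case True
    with z Suc.prems zu show ?thesis
      by (auto simp: lex_iff relcompp_apply)
  next
    case False
    obtain d where d: "d \<in> HV z"
      using layer_nonempty zu(1) by blast
    have "(lex ^^ k) (w, c) (z, d)"
      using Suc.IH[OF z(1) _ Suc.prems(3) d] False by simp
    moreover have "lex (z, d) (u, a)"
      using z d Suc.prems zu by (auto simp: lex_iff)
    ultimately show ?thesis
      by (rule relpowp_Suc_I)
  qed
qed simp

lemma lex_walk_project: "(lex ^^ m) p q \<Longrightarrow> \<exists>k\<le>m. (E ^^ k) (fst p) (fst q)"
proof (induction m arbitrary: q)
  case (Suc m)
  from Suc.prems obtain r where r: "(lex ^^ m) p r" "lex r q"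
    by (rule relpowp_Suc_E)
  from Suc.IH[OF r(1)] obtain k where k: "k \<le> m" "(E ^^ k) (fst p) (fst r)"
    by blast
  from r(2) have "E (fst r) (fst q) \<or> fst r = fst q"
    by (auto simp: lex_iff)
  then show ?case
    using k by (metis Suc_le_mono le_SucI relpowp_Suc_I)
qed auto

lemma dist_lex_other_layer:
  assumes "(w, c) \<in> Sigma V HV" and "(u, a) \<in> Sigma V HV" and "w \<noteq> u"
  shows "dist lex (w, c) (u, a) = dist E w u"
proof (rule antisym; rule dist_le_dist_if_shorter_walks)
  fix m assume walk: "(E ^^ m) w u"
  with assms(3) have "m \<ge> 1"
    by (cases m) auto
  with walk assms show "\<exists>k\<le>m. (lex ^^ k) (w, c) (u, a)"
    using lex_walk_lift by blast
qed (use lex_walk_project in fastforce)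

lemma dist_lex_same_layer:
  assumes "u \<in> V" and "c \<in> HV u" and "a \<in> HV u"
  shows "dist lex (u, c) (u, a) = dist2 (HE u) c a"
proof -
  have edge: "lex (u, c) (u, a) \<longleftrightarrow> HE u c a"
    using assms graph_irrefl[OF graph] by (auto simp: lex_iff)
  show ?thesis
  proof (cases "c = a \<or> HE u c a")
    case True
    with edge show ?thesis
      using dist_eq_1_iff[of lex "(u, c)" "(u, a)"] by (auto simp: dist2_eq)
  next
    case False
    obtain y where y: "E u y"
      using exists_neighbour[OF connected two_vertices assms(1)] by blast
    then obtain d where d: "d \<in> HV y"
      using layer_nonempty graph_edge_vertices[OF graph] by blast
    have "lex (u, c) (y, d)" and "lex (y, d) (u, a)"
      using y d assms graph_edge_vertices[OF graph] graph_sym[OF graph] by (auto simp: lex_iff)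
    then have "(lex ^^ 2) (u, c) (u, a)"
      by (auto simp: numeral_2_eq_2 relcompp_apply)
    moreover have "\<not> (lex ^^ m) (u, c) (u, a)" if "m < 2" for m
      using that False edge by (auto simp: less_2_cases_iff relcompp_apply)
    ultimately have "dist lex (u, c) (u, a) = enat 2"
      by (rule dist_eq_enatI)
    with False show ?thesis
      by (simp add: dist2_eq numeral_eq_enat)
  qed
qed

lemma dist2_layer_eq_1_iff:
  "u \<in> V \<Longrightarrow> dist2 (HE u) c a = 1 \<longleftrightarrow> HE u a c"
  using graph_sym[OF layer_graph] graph_irrefl[OF layer_graph] by (auto simp: dist2_eq)

text \<open>Vertices in other layers see both ends of an edge of the layer of \<open>u\<close> at the same distance.\<close>

lemma local_resolving_layer:
  assumes "S \<subseteq> Sigma V HV" and "local_resolving lex (dist lex) S" and "u \<in> V"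
  shows "local_resolving (HE u) (dist2 (HE u)) (S `` {u})"
  unfolding local_resolving_def
proof (intro allI impI)
  fix a b assume ab: "HE u a b"
  then have "a \<in> HV u" "b \<in> HV u"
    using graph_edge_vertices[OF layer_graph[OF assms(3)]] by auto
  moreover have "lex (u, a) (u, b)"
    using ab calculation assms(3) by (auto simp: lex_iff)
  ultimately obtain w c where "(w, c) \<in> S" "dist lex (w, c) (u, a) \<noteq> dist lex (w, c) (u, b)"
    "(w, c) \<in> Sigma V HV"
    using assms(1,2) unfolding local_resolving_def by blast
  with \<open>a \<in> HV u\<close> \<open>b \<in> HV u\<close> assms(3) show "\<exists>s\<in>S `` {u}. dist2 (HE u) s a \<noteq> dist2 (HE u) s b"
    using dist_lex_same_layer dist_lex_other_layer by (cases "w = u") auto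
qed

lemma twin_layers_not_both_in_open_nbhd:
  assumes "S \<subseteq> Sigma V HV" and "local_resolving lex (dist lex) S"
    and "u \<in> V" and "u' \<in> V" and "u \<noteq> u'" and "closed_nbhd E u = closed_nbhd E u'"
  shows "\<not> (in_open_nbhd (HV u) (HE u) (S `` {u}) \<and> in_open_nbhd (HV u') (HE u') (S `` {u'}))"
proof
  assume "in_open_nbhd (HV u) (HE u) (S `` {u}) \<and> in_open_nbhd (HV u') (HE u') (S `` {u'})"
  then obtain a b where a: "a \<in> HV u" "S `` {u} \<subseteq> {w. HE u a w}"
    and b: "b \<in> HV u'" "S `` {u'} \<subseteq> {w. HE u' b w}"
    unfolding in_open_nbhd_def by blast
  have "E u u'"
    using twins_adjacent assms(5,6) .
  then have "lex (u, a) (u', b)" and d1: "dist E u u' = 1" "dist E u' u = 1"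
    using a b assms(3-5) graph_sym[OF graph] by (auto simp: lex_iff dist_eq_1_iff)
  then obtain w c where s: "(w, c) \<in> S" "(w, c) \<in> Sigma V HV"
    and ne: "dist lex (w, c) (u, a) \<noteq> dist lex (w, c) (u', b)"
    using assms(1,2) unfolding local_resolving_def by blast
  consider "w = u" | "w = u'" | "w \<noteq> u" "w \<noteq> u'"
    by blast
  then show False
  proof cases
    case 1
    with s a have "dist2 (HE u) c a = 1"
      using dist2_layer_eq_1_iff[OF assms(3)] by blast
    with ne 1 s a b assms show False
      using dist_lex_same_layer dist_lex_other_layer d1 by simp
  next
    case 2
    with s b have "dist2 (HE u') c b = 1"
      using dist2_layer_eq_1_iff[OF assms(4)] by blast
    with ne 2 s a b assms show False
      using dist_lex_same_layer dist_lex_other_layer d1 by simp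
  next
    case 3
    with ne s a b assms show False
      using dist_lex_other_layer dist_twin[OF graph 3 assms(6)] by simp
  qed
qed

lemma local_resolving_lexI:
  assumes S: "S \<subseteq> Sigma V HV"
    and layer: "\<And>u. u \<in> V \<Longrightarrow> local_resolving (HE u) (dist2 (HE u)) (S `` {u})"
    and twins: "\<And>u u'. u \<in> V \<Longrightarrow> u' \<in> V \<Longrightarrow> u \<noteq> u' \<Longrightarrow> closed_nbhd E u = closed_nbhd E u' \<Longrightarrow>
       \<not> (in_open_nbhd (HV u) (HE u) (S `` {u}) \<and> in_open_nbhd (HV u') (HE u') (S `` {u'}))"
  shows "local_resolving lex (dist lex) S"
  unfolding local_resolving_def
proof (intro allI impI)
  fix p q assume pq: "lex p q"
  then obtain u a u' b where p: "p = (u, a)" and q: "q = (u', b)"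
    and pV: "u \<in> V" "a \<in> HV u" and qV: "u' \<in> V" "b \<in> HV u'"
    by (auto simp: lex_iff)
  show "\<exists>s\<in>S. dist lex s p \<noteq> dist lex s q"
  proof (cases "u = u'")
    case True
    with pq p q have "HE u a b"
      using graph_irrefl[OF graph] by (auto simp: lex_iff)
    then obtain c where "c \<in> S `` {u}" "dist2 (HE u) c a \<noteq> dist2 (HE u) c b"
      using layer[OF pV(1)] unfolding local_resolving_def by blast
    with True p q pV qV S show ?thesis
      using dist_lex_same_layer by (intro bexI[of _ "(u, c)"]) auto
  next
    case ne: False
    with pq p q have "E u u'"
      by (auto simp: lex_iff)
    then have d1: "dist E u u' = 1" "dist E u' u = 1"
      using graph_sym[OF graph] ne by (auto simp: dist_eq_1_iff)
    show ?thesis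
    proof (cases "closed_nbhd E u = closed_nbhd E u'")
      case True
      \<comment> \<open>a vertex of \<open>S\<^sub>u\<close> outside \<open>N(a)\<close> is at distance 0 or 2 from \<open>(u, a)\<close>
        but at distance 1 from \<open>(u', b)\<close>\<close>
      from twins[OF pV(1) qV(1) ne True] pV qV
      consider c where "c \<in> S `` {u}" "\<not> HE u a c" | c where "c \<in> S `` {u'}" "\<not> HE u' b c"
        unfolding in_open_nbhd_def by blast
      then show ?thesis
      proof cases
        case 1
        with S p q pV qV ne d1 show ?thesis
          using dist_lex_same_layer dist_lex_other_layer dist2_layer_eq_1_iff
          by (intro bexI[of _ "(u, c)"]) auto
      next
        case 2
        with S p q pV qV ne d1 show ?thesis
          using dist_lex_same_layer dist_lex_other_layer dist2_layer_eq_1_iff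
          by (intro bexI[of _ "(u', c)"]) auto
      qed
    next
      case False
      then obtain w where w: "w \<noteq> u" "w \<noteq> u'" "E w u \<noteq> E w u'"
        using exists_vertex_separating_non_twins[OF graph \<open>E u u'\<close>] by blast
      then have wV: "w \<in> V"
        using graph_edge_vertices[OF graph] by blast
      obtain c where c: "c \<in> S `` {w}"
        using layer[OF wV] layers wV unfolding local_resolving_def by blast
      then have "(w, c) \<in> S" "c \<in> HV w"
        using S by auto
      moreover have "dist lex (w, c) p = dist E w u" "dist lex (w, c) q = dist E w u'"
        using dist_lex_other_layer calculation(2) wV pV qV p q w(1,2) by auto
      moreover have "dist E w u \<noteq> dist E w u'"
        using w dist_eq_1_iff[of E w] by metis
      ultimately show ?thesis
        by metis
    qed
  qed
qed

lemma card_local_resolving_lex_ge: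
  assumes S: "S \<subseteq> Sigma V HV" and R: "local_resolving lex (dist lex) S"
  shows "(\<Sum>u\<in>V. local_adj_dim (HV u) (HE u)) + (\<Sum>U\<in>twin_class V E ` V. card (I \<inter> U) - 1)
    \<le> card S"
proof -
  have layer_sub: "S `` {u} \<subseteq> HV u" if "u \<in> V" for u
    using S by auto
  have layer_res: "local_resolving (HE u) (dist2 (HE u)) (S `` {u})" if "u \<in> V" for u
    using local_resolving_layer[OF S R that] .
  have tight: "\<forall>U\<in>twin_class V E ` V. \<forall>u\<in>I \<inter> U. \<forall>u'\<in>I \<inter> U.
      card (S `` {u}) = local_adj_dim (HV u) (HE u) \<longrightarrow>
      card (S `` {u'}) = local_adj_dim (HV u') (HE u') \<longrightarrow> u = u'"
  proof (intro ballI impI)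
    fix U u u' assume U: "U \<in> twin_class V E ` V" and u: "u \<in> I \<inter> U" "u' \<in> I \<inter> U"
      and card_eq: "card (S `` {u}) = local_adj_dim (HV u) (HE u)"
        "card (S `` {u'}) = local_adj_dim (HV u') (HE u')"
    have "local_adj_basis (HV u) (HE u) (S `` {u})"
      "local_adj_basis (HV u') (HE u') (S `` {u'})"
      using u card_eq layer_sub layer_res unfolding local_adj_basis_def by auto
    with u have "in_open_nbhd (HV u) (HE u) (S `` {u})"
      "in_open_nbhd (HV u') (HE u') (S `` {u'})"
      unfolding class_G_iff by auto
    moreover obtain x where "U = twin_class V E x"
      using U by blast
    then have "closed_nbhd E u = closed_nbhd E u'"
      using u closed_nbhd_eq_if_twin_class[of u V E x u'] by blast
    ultimately show "u = u'"
      using twin_layers_not_both_in_open_nbhd[OF S R, of u u'] u by blast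
  qed
  have "\<forall>u\<in>V. local_adj_dim (HV u) (HE u) \<le> card (S `` {u})"
    using local_adj_dim_le_card[OF layer_sub layer_res] by simp
  then have "(\<Sum>u\<in>V. local_adj_dim (HV u) (HE u)) + (\<Sum>U\<in>twin_class V E ` V. card (I \<inter> U) - 1)
    \<le> (\<Sum>u\<in>V. card (S `` {u}))"
    by (rule sum_plus_block_defects_le[OF finite_vertices twin_classes_subset twin_classes_disjoint _ tight])
  also have "\<dots> = card (Sigma V (\<lambda>u. S `` {u}))"
    using finite_vertices finite_subset[OF layer_sub finite_layer] by simp
  also have "Sigma V (\<lambda>u. S `` {u}) = S"
    using S by auto
  finally show ?thesis .
qed

lemma exists_local_resolving_lex_of_card:
  "\<exists>S\<subseteq>Sigma V HV. local_resolving lex (dist lex) S \<and>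
    card S = (\<Sum>u\<in>V. local_adj_dim (HV u) (HE u)) + (\<Sum>U\<in>twin_class V E ` V. card (I \<inter> U) - 1)"
proof -
  obtain X where X: "X \<subseteq> I" "card X = (\<Sum>U\<in>twin_class V E ` V. card (I \<inter> U) - 1)"
    and one_left: "\<forall>U\<in>twin_class V E ` V. \<forall>u\<in>I \<inter> U - X. \<forall>u'\<in>I \<inter> U - X. u = u'"
    using exists_subset_omitting_one_per_block[OF finite_vertices twin_classes_subset[of V E]
        twin_classes_disjoint[of V E], where J = I] by auto
  have "\<forall>u\<in>V. \<exists>T\<subseteq>HV u. local_resolving (HE u) (dist2 (HE u)) T
      \<and> card T = local_adj_dim (HV u) (HE u) + of_bool (u \<in> X)
      \<and> (in_open_nbhd (HV u) (HE u) T \<longrightarrow> class_G (HV u) (HE u) \<and> u \<notin> X)"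
    using X(1) by (intro ballI exists_local_resolving_set layer_graph) blast+
  from bchoice[OF this] obtain T where T: "\<forall>u\<in>V. T u \<subseteq> HV u \<and> local_resolving (HE u) (dist2 (HE u)) (T u)
      \<and> card (T u) = local_adj_dim (HV u) (HE u) + of_bool (u \<in> X)
      \<and> (in_open_nbhd (HV u) (HE u) (T u) \<longrightarrow> class_G (HV u) (HE u) \<and> u \<notin> X)"
    by blast
  then have T_sub: "\<And>u. u \<in> V \<Longrightarrow> T u \<subseteq> HV u"
    and T_res: "\<And>u. u \<in> V \<Longrightarrow> local_resolving (HE u) (dist2 (HE u)) (T u)"
    and T_card: "\<And>u. u \<in> V \<Longrightarrow> card (T u) = local_adj_dim (HV u) (HE u) + of_bool (u \<in> X)"
    and T_nbhd: "\<And>u. u \<in> V \<Longrightarrow> in_open_nbhd (HV u) (HE u) (T u) \<Longrightarrow> u \<in> I - X"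
    by simp_all
  define S where "S = Sigma V T"
  have layer_S: "S `` {u} = T u" if "u \<in> V" for u
    using that unfolding S_def by auto
  have S_sub: "S \<subseteq> Sigma V HV"
    unfolding S_def using T_sub by blast
  have resolving: "local_resolving lex (dist lex) S"
  proof (rule local_resolving_lexI[OF S_sub])
    show "local_resolving (HE u) (dist2 (HE u)) (S `` {u})" if "u \<in> V" for u
      using T_res layer_S that by simp
  next
    fix u u' assume u: "u \<in> V" "u' \<in> V" "u \<noteq> u'" "closed_nbhd E u = closed_nbhd E u'"
    show "\<not> (in_open_nbhd (HV u) (HE u) (S `` {u}) \<and> in_open_nbhd (HV u') (HE u') (S `` {u'}))"
    proof
      assume nbhd: "in_open_nbhd (HV u) (HE u) (S `` {u}) \<and> in_open_nbhd (HV u') (HE u') (S `` {u'})"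
      have "twin_class V E u \<in> twin_class V E ` V"
        using u(1) by (rule imageI)
      moreover have "u \<in> I \<inter> twin_class V E u - X" "u' \<in> I \<inter> twin_class V E u - X"
        using nbhd T_nbhd u layer_S unfolding twin_class_def by auto
      ultimately have "u = u'"
        by (rule one_left[rule_format])
      with u(3) show False ..
    qed
  qed
  have "card S = (\<Sum>u\<in>V. card (T u))"
    unfolding S_def using finite_vertices finite_subset[OF T_sub finite_layer] by simp
  also have "\<dots> = (\<Sum>u\<in>V. local_adj_dim (HV u) (HE u) + of_bool (u \<in> X))"
    using T_card by (rule sum.cong[OF refl])
  also have "\<dots> = (\<Sum>u\<in>V. local_adj_dim (HV u) (HE u)) + card X"
  proof -
    have "V \<inter> X = X"
      using X(1) by blast
    then show ?thesis
      using finite_vertices by (simp add: sum.distrib sum.If_cases)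
  qed
  finally show ?thesis
    using S_sub resolving X(2) by (intro exI[of _ S]) simp
qed

end

theorem mainTheorem2:
  fixes V :: "'a set" and E :: "'a \<Rightarrow> 'a \<Rightarrow> bool"
    and HV :: "'a \<Rightarrow> 'b set" and HE :: "'a \<Rightarrow> 'b \<Rightarrow> 'b \<Rightarrow> bool"
  assumes "graph V E" and "connected_graph V E" and "card V \<ge> 2"
    and "\<forall>u\<in>V. graph (HV u) (HE u) \<and> (\<exists>v w. HE u v w)"
  shows "local_metric_dim (lex_V V HV) (lex_E V E HV HE) =
     (\<Sum>u\<in>V. local_adj_dim (HV u) (HE u)) +
     (\<Sum>U\<in>{U. (\<exists>x\<in>V. U = twin_class V E x) \<and> card U \<ge> 2
              \<and> {u\<in>V. class_G (HV u) (HE u)} \<inter> U \<noteq> {}}.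
        card ({u\<in>V. class_G (HV u) (HE u)} \<inter> U) - 1)"
proof -
  interpret lex_product V E HV HE
    using assms by unfold_locales
  have classes: "{U. (\<exists>x\<in>V. U = twin_class V E x) \<and> card U \<ge> 2 \<and> I \<inter> U \<noteq> {}}
      = {U\<in>twin_class V E ` V. 2 \<le> card U \<and> I \<inter> U \<noteq> {}}"
    by blast
  \<comment> \<open>classes that are singletons or miss \<open>I\<close> contribute \<open>0\<close> by truncated subtraction\<close>
  have "\<forall>U\<in>twin_class V E ` V. finite U"
    using twin_classes_subset[of V E] finite_subset[OF _ finite_vertices] by blast
  then have defects: "(\<Sum>U\<in>{U\<in>twin_class V E ` V. 2 \<le> card U \<and> I \<inter> U \<noteq> {}}. card (I \<inter> U) - 1)
      = (\<Sum>U\<in>twin_class V E ` V. card (I \<inter> U) - 1)"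
    using finite_vertices by (intro sum_card_inter_minus_1_filter) simp_all
  show ?thesis
    unfolding classes defects local_metric_dim_def lex_V_def
  proof (rule Least_equality)
    show "\<exists>S. S \<subseteq> Sigma V HV \<and> card S = (\<Sum>u\<in>V. local_adj_dim (HV u) (HE u))
        + (\<Sum>U\<in>twin_class V E ` V. card (I \<inter> U) - 1) \<and> local_resolving lex (dist lex) S"
      using exists_local_resolving_lex_of_card by blast
  qed (use card_local_resolving_lex_ge in blast)
qed

end
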